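(* Let $N=2^L$ ($L\ge1$), channel numbers $r_0,\dots,r_{L-1}\ge1$ and an output index $y$. There exist representation functions $f_{\theta_1},\dots,f_{\theta_M}\in\mathcal F$ and weights for the deep ConvNet with ReLU activation, max pooling and weight sharing, such that its score function $h^D_y$ is not equal to the score function $h^S_y$ of any shallow ConvNet with ReLU activation and max pooling (not limited by weight sharing) whose number of hidden channels satisfies $Z<\min\{r_0,M\}^{N/2}\cdot\frac{2}{M\cdot N}$ (for any choice of its representation functions in $\mathcal F$ and weights).
   Context: Inputs are $X=(\mathbf x_1,\dots,\mathbf x_N)\in(\mathbb R^s)^N$. Representation functions come from a family $\mathcal F=\{f_\theta:\mathbb R^s\to\mathbb R:\theta\in\Theta\}$ assumed throughout to satisfy: (continuity) $f_\theta(\mathbf x)$ continuous in $\theta$ and $\mathbf x$; (non-degeneracy) for any pairwise distinct $\mathbf x^{(1)},\dots,\mathbf x^{(M)}$ there exist $f_{\theta_1},\dots,f_{\theta_M}\in\mathcal F$ with $(f_{\theta_d}(\mathbf x^{(i)}))_{i,d}$ non-singular. ReLU activation with max pooling: $\sigma(z)=\max\{0,z\}$, $P=\max$. Shallow ConvNet ($Z$ hidden channels, unshared): $h^S_y(X)=\sum_{z=1}^Z a^y_z\,P_{i\in[N]}\big(\sigma(\sum_{d=1}^M a^{z,i}_d f_{\theta_d}(\mathbf x_i))\big)$ with arbitrary $\mathbf a^{z,i}\in\mathbb R^M$, $\mathbf a^y\in\mathbb R^Z$. Deep ConvNet with weight sharing: with $f_{\theta_d}\in\mathcal F$ and weights $\mathbf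 a^{0,\gamma}\in\mathbb R^M$ ($\gamma\in[r_0]$), $\mathbf a^{l,\gamma}\in\mathbb R^{r_{l-1}}$ ($l\in[L-1]$, $\gamma\in[r_l]$), $\mathbf a^{L,y}\in\mathbb R^{r_{L-1}}$ (the same at every spatial location): $u^0_{j,\gamma}=\sigma(\sum_d a^{0,\gamma}_d f_{\theta_d}(\mathbf x_j))$ for $j\in[N]$; for $l=0,\dots,L-1$, $v^l_{j,\gamma}=P(u^l_{2j-1,\gamma},u^l_{2j,\gamma})$ for $j\in[N/2^{l+1}]$, and for $l\ge1$, $u^l_{j,\gamma}=\sigma(\sum_{\alpha=1}^{r_{l-1}}a^{l,\gamma}_\alpha v^{l-1}_{j,\alpha})$ for $j\in[N/2^l]$; $h^D_y(X)=\sum_\alpha a^{L,y}_\alpha v^{L-1}_{1,\alpha}$. *)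

theory Defs
  imports "HOL-Analysis.Analysis" "Jordan_Normal_Form.Determinant"
begin

text \<open>Representation family: f :: 'theta => real^'s => real, with parameter space Theta = UNIV :: 'theta set.\<close>

definition relu :: "real \<Rightarrow> real" where
  "relu z = max 0 z"

definition family_continuous :: "('theta::topological_space \<Rightarrow> real^'s \<Rightarrow> real) \<Rightarrow> bool" where
  "family_continuous f \<longleftrightarrow> continuous_on UNIV (\<lambda>p. f (fst p) (snd p))"

definition family_nondegenerate :: "('theta \<Rightarrow> real^'s \<Rightarrow> real) \<Rightarrow> bool" where
  "family_nondegenerate f \<longleftrightarrow>
     (\<forall>(M::nat) (xs :: nat \<Rightarrow> real^'s). inj_on xs {..<M} \<longrightarrow>
        (\<exists>th :: nat \<Rightarrow> 'theta. Determinant.det (Matrix.mat M M (\<lambda>(i,d). f (th d) (xs i))) \<noteq> 0))"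

text \<open>Deep ConvNet with weight sharing, 0-indexed.
  th d (d<M): representation parameters; a0 g d: first-layer weights (g < r 0, d < M);
  A l g al: weights of layer l (1 <= l <= L-1), g < r l, al < r (l-1);
  X j (j < N): input patches.  u l j g is u^l_{j+1,g+1}, v l j g is v^l_{j+1,g+1}.\<close>

fun deep_u :: "('theta \<Rightarrow> real^'s \<Rightarrow> real) \<Rightarrow> (nat \<Rightarrow> 'theta) \<Rightarrow> nat \<Rightarrow> (nat \<Rightarrow> nat)
   \<Rightarrow> (nat \<Rightarrow> nat \<Rightarrow> real) \<Rightarrow> (nat \<Rightarrow> nat \<Rightarrow> nat \<Rightarrow> real) \<Rightarrow> (nat \<Rightarrow> real^'s)
   \<Rightarrow> nat \<Rightarrow> nat \<Rightarrow> nat \<Rightarrow> real" where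
  "deep_u f th M r a0 A X 0 j g = relu (\<Sum>d<M. a0 g d * f (th d) (X j))"
| "deep_u f th M r a0 A X (Suc l) j g =
     relu (\<Sum>al<r l. A (Suc l) g al *
        max (deep_u f th M r a0 A X l (2*j) al) (deep_u f th M r a0 A X l (2*j+1) al))"

definition deep_v where
  "deep_v f th M r a0 A X l j g =
     max (deep_u f th M r a0 A X l (2*j) g) (deep_u f th M r a0 A X l (2*j+1) g)"

definition deep_score :: "('theta \<Rightarrow> real^'s \<Rightarrow> real) \<Rightarrow> (nat \<Rightarrow> 'theta) \<Rightarrow> nat \<Rightarrow> nat \<Rightarrow> (nat \<Rightarrow> nat)
   \<Rightarrow> (nat \<Rightarrow> nat \<Rightarrow> real) \<Rightarrow> (nat \<Rightarrow> nat \<Rightarrow> nat \<Rightarrow> real) \<Rightarrow> (nat \<Rightarrow> real)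
   \<Rightarrow> (nat \<Rightarrow> real^'s) \<Rightarrow> real" where
  "deep_score f th M L r a0 A aL X =
     (\<Sum>al<r (L-1). aL al * deep_v f th M r a0 A X (L-1) 0 al)"

text \<open>Shallow ConvNet (no weight sharing), 0-indexed: Z hidden channels,
  c z i d = a^{z,i}_d, b z = a^y_z, N input patches.\<close>

definition shallow_score :: "('theta \<Rightarrow> real^'s \<Rightarrow> real) \<Rightarrow> (nat \<Rightarrow> 'theta) \<Rightarrow> nat \<Rightarrow> nat \<Rightarrow> nat
   \<Rightarrow> (nat \<Rightarrow> nat \<Rightarrow> nat \<Rightarrow> real) \<Rightarrow> (nat \<Rightarrow> real) \<Rightarrow> (nat \<Rightarrow> real^'s) \<Rightarrow> real" where
  "shallow_score f th M N Z c b X =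
     (\<Sum>z<Z. b z * Max ((\<lambda>i. relu (\<Sum>d<M. c z i d * f (th d) (X i))) ` {..<N}))"

end

theory Submission
  imports Defs "HOL-Library.Function_Algebras"
begin

text \<open>
  Feed both networks inputs whose patches at even positions come from a tuple \<open>p \<in> [m]\<^sup>n\<close>
  of \<open>m = min r\<^sub>0 M\<close> fixed points and whose patches at odd positions come from a tuple \<open>q\<close>
  (\<open>n = N/2\<close>). Non-degeneracy lets the first deep layer produce, on these points, channels
  equal to 1 at their own point and 2 elsewhere; summing the first \<open>m\<close> channels in layer 1
  and carrying channel 0 up the pooling tree makes the deep score \<open>2m - [p = q]\<close>, a grid
  matrix of full rank \<open>m\<^sup>n\<close>. The shallow score is \<open>\<Sum>\<^sub>z b\<^sub>z max (P\<^sub>z p) (Q\<^sub>z q)\<close> with \<open>Q\<^sub>z q\<close>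
  taking at most \<open>n m\<close> values, so its grid matrix has rank at most \<open>Z n m\<close>. Hence
  \<open>m\<^sup>n \<le> Z n M\<close>.
\<close>

subsection \<open>Linear algebra\<close>

definition scale_fun :: "real \<Rightarrow> ('a \<Rightarrow> real) \<Rightarrow> 'a \<Rightarrow> real" where
  "scale_fun c g = (\<lambda>x. c * g x)"

interpretation fun_vs: vector_space scale_fun
  by unfold_locales (auto simp: scale_fun_def algebra_simps fun_eq_iff)

lemma sum_apply: "finite A \<Longrightarrow> (\<Sum>x\<in>A. g x) y = (\<Sum>x\<in>A. g x y)"
  by (induction A rule: finite_induct) auto

lemma inj_on_shifted_identity:
  fixes c :: real
  assumes "\<And>p q. p \<in> Q \<Longrightarrow> q \<in> Q \<Longrightarrow> F q p = c - of_bool (p = q)"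
  shows "inj_on F Q"
proof (rule inj_onI)
  fix q1 q2 assume "q1 \<in> Q" "q2 \<in> Q" "F q1 = F q2"
  then have "c - of_bool (q1 = q1) = c - of_bool (q1 = q2)"
    using assms by metis
  then show "q1 = q2" by simp
qed

text \<open>On \<open>Q\<close> the family \<open>F\<close> is the matrix \<open>c J - I\<close>, invertible unless \<open>c |Q| = 1\<close>.\<close>

lemma independent_shifted_identity:
  fixes c :: real
  assumes fin: "finite Q" and c: "real (card Q) * c \<noteq> 1"
    and F_eq: "\<And>p q. p \<in> Q \<Longrightarrow> q \<in> Q \<Longrightarrow> F q p = c - of_bool (p = q)"
  shows "fun_vs.independent (F ` Q)"
  unfolding fun_vs.dependent_finite[OF finite_imageI[OF fin]]
proof (rule notI, elim exE conjE)
  fix u assume nz: "\<exists>v\<in>F ` Q. u v \<noteq> 0" and z: "(\<Sum>v\<in>F ` Q. scale_fun (u v) v) = 0"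
  define w where "w q = u (F q)" for q
  define s where "s = (\<Sum>q\<in>Q. w q)"
  have w: "w p = c * s" if p: "p \<in> Q" for p
  proof -
    have "0 = (\<Sum>q\<in>Q. scale_fun (w q) (F q)) p"
      using z by (simp add: sum.reindex[OF inj_on_shifted_identity[OF F_eq]] w_def)
    also have "\<dots> = (\<Sum>q\<in>Q. c * w q - of_bool (p = q) * w q)"
      using fin p F_eq by (simp add: sum_apply scale_fun_def right_diff_distrib mult.commute)
    also have "\<dots> = c * s - w p"
    proof -
      have "Q \<inter> {q. p = q} = {p}" using p by auto
      with fin show ?thesis by (simp add: s_def sum_subtractf sum_distrib_left)
    qed
    finally show ?thesis by simp
  qed
  then have "(\<Sum>q\<in>Q. w q) = (\<Sum>q\<in>Q. c * s)"
    by (intro sum.cong) simp_all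
  then have "s = real (card Q) * c * s"
    by (simp flip: s_def)
  with c have "s = 0"
    by (metis mult_cancel_right1)
  with nz w show False
    by (auto simp: w_def)
qed

lemma card_le_span_shifted_identity:
  fixes c :: real
  assumes "finite Q" "real (card Q) * c \<noteq> 1" "finite S"
    and F_eq: "\<And>p q. p \<in> Q \<Longrightarrow> q \<in> Q \<Longrightarrow> F q p = c - of_bool (p = q)"
    and span: "F ` Q \<subseteq> fun_vs.span S"
  shows "card Q \<le> card S"
  using fun_vs.independent_span_bound[OF assms(3) independent_shifted_identity[OF assms(1,2) F_eq] span]
  by (simp add: card_image inj_on_shifted_identity[OF F_eq])

lemma det_nonzero_imp_solvable:
  fixes g :: "nat \<Rightarrow> nat \<Rightarrow> real"
  assumes "Determinant.det (Matrix.mat M M (\<lambda>(i,d). g i d)) \<noteq> 0"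
  shows "\<exists>a. \<forall>i<M. (\<Sum>d<M. a d * g i d) = t i"
proof -
  let ?F = "Matrix.mat M M (\<lambda>(i,d). g i d)"
  have F: "?F \<in> carrier_mat M M" by auto
  from det_non_zero_imp_unit[OF F assms, of "()"]
  obtain B where B: "B \<in> carrier_mat M M" and FB: "?F * B = 1\<^sub>m M"
    unfolding Units_def ring_mat_def by auto
  let ?v = "B *\<^sub>v vec M t"
  have "?F *\<^sub>v ?v = (?F * B) *\<^sub>v vec M t"
    using B F by (subst assoc_mult_mat_vec) auto
  also have "\<dots> = vec M t" using FB by simp
  finally have eq: "?F *\<^sub>v ?v = vec M t" .
  show ?thesis
  proof (intro exI allI impI)
    fix i assume i: "i < M"
    have "(?F *\<^sub>v ?v) $ i = (\<Sum>d<M. ?v $ d * g i d)"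
      using i B by (simp add: mult_mat_vec_def scalar_prod_def lessThan_atLeast0 mult.commute)
    with eq i show "(\<Sum>d<M. ?v $ d * g i d) = t i" by simp
  qed
qed

lemma nondegenerate_interpolation:
  fixes M :: nat
  assumes "family_nondegenerate f" "inj_on xs {..<M}"
  shows "\<exists>th. \<forall>t. \<exists>a. \<forall>i<M. (\<Sum>d<M. a d * f (th d) (xs i)) = t i"
proof -
  obtain th where "Determinant.det (Matrix.mat M M (\<lambda>(i,d). f (th d) (xs i))) \<noteq> 0"
    using assms unfolding family_nondegenerate_def by blast
  then show ?thesis
    using det_nonzero_imp_solvable[where g = "\<lambda>i d. f (th d) (xs i)"] by auto
qed

subsection \<open>Maxima over blocks\<close>

lemma Max_image_interval_split:
  fixes h :: "nat \<Rightarrow> 'a::linorder"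
  assumes "a < b" "b < c"
  shows "max (Max (h ` {a..<b})) (Max (h ` {b..<c})) = Max (h ` {a..<c})"
proof -
  have "{a..<c} = {a..<b} \<union> {b..<c}" using assms by auto
  then show ?thesis
    using assms by (simp add: image_Un Max_Un)
qed

lemma Max_image_even_odd:
  fixes h :: "nat \<Rightarrow> 'a::linorder"
  assumes "n \<ge> 1"
  shows "Max (h ` {..<2*n}) = max (Max ((\<lambda>k. h (2*k)) ` {..<n})) (Max ((\<lambda>k. h (2*k+1)) ` {..<n}))"
proof -
  have "x \<in> (\<lambda>k. 2*k) ` {..<n} \<union> (\<lambda>k. 2*k+1) ` {..<n}" if "x < 2*n" for x
    using that by (cases "even x") (auto elim!: evenE oddE)
  then have "{..<2*n} = (\<lambda>k. 2*k) ` {..<n} \<union> (\<lambda>k. 2*k+1) ` {..<n}"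
    by auto
  then have "h ` {..<2*n} = (\<lambda>k. h (2*k)) ` {..<n} \<union> (\<lambda>k. h (2*k+1)) ` {..<n}"
    by (simp add: image_Un image_image)
  with assms show ?thesis
    by (simp add: Max_Un lessThan_empty_iff)
qed

lemma Max_shifted_indicator:
  fixes c :: real and n :: nat
  assumes "p \<in> PiE {..<n} B" "q \<in> PiE {..<n} B" "n \<ge> 1"
  shows "Max ((\<lambda>k. c - of_bool (p k = q k)) ` {..<n}) = c - of_bool (p = q)"
proof (cases "p = q")
  case True
  moreover have "{..<n} \<noteq> {}"
    using assms(3) by (simp add: lessThan_empty_iff)
  ultimately have "(\<lambda>k. c - of_bool (p k = q k)) ` {..<n} = {c - 1}"
    by (simp add: image_constant_conv)
  with True show ?thesis by simp
next
  case False
  then obtain k where "k < n" "p k \<noteq> q k"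
    using PiE_ext[OF assms(1,2)] by auto
  with False show ?thesis
    by (intro Max_eqI) auto
qed

subsection \<open>The deep network\<close>

lemma relu_eq_self: "0 \<le> x \<Longrightarrow> relu x = x"
  by (simp add: relu_def)

lemma deep_u_nonneg: "0 \<le> deep_u f th M r a0 A X l j g"
  by (cases l) (simp_all add: relu_def)

lemma deep_v_nonneg: "0 \<le> deep_v f th M r a0 A X l j g"
  by (simp add: deep_v_def deep_u_nonneg max.coboundedI1)

lemma deep_score_eq_deep_u:
  assumes "L \<ge> 1" "\<And>\<alpha>. 0 \<le> A L g \<alpha>"
  shows "deep_score f th M L r a0 A (A L g) X = deep_u f th M r a0 A X L 0 g"
proof -
  obtain k where L: "L = Suc k" using assms(1) by (cases L) auto
  have "0 \<le> (\<Sum>\<alpha><r k. A L g \<alpha> * deep_v f th M r a0 A X k 0 \<alpha>)"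
    by (intro sum_nonneg mult_nonneg_nonneg assms(2) deep_v_nonneg)
  then show ?thesis
    by (simp add: L deep_score_def relu_eq_self deep_v_def)
qed

definition pooling_weights :: "nat \<Rightarrow> nat \<Rightarrow> nat \<Rightarrow> nat \<Rightarrow> real" where
  "pooling_weights m l g \<alpha> = (if l \<le> 1 then of_bool (\<alpha> < m) else of_bool (\<alpha> = 0))"

lemma pooling_weights_first [simp]: "pooling_weights m (Suc 0) g \<alpha> = of_bool (\<alpha> < m)"
  by (simp add: pooling_weights_def)

lemma pooling_weights_later [simp]: "pooling_weights m (Suc (Suc l)) g \<alpha> = of_bool (\<alpha> = 0)"
  by (simp add: pooling_weights_def)

lemma deep_u_Suc:
  "deep_u f th M r a0 A X (Suc l) j g = relu (\<Sum>\<alpha><r l. A (Suc l) g \<alpha> * deep_v f th M r a0 A X l j \<alpha>)"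
  by (simp add: deep_v_def)

lemma deep_u_pooling_weights:
  assumes "m \<le> r 0" "\<forall>l\<le>k. 1 \<le> r l"
  shows "deep_u f th M r a0 (pooling_weights m) X (Suc k) j g
       = Max ((\<lambda>i. \<Sum>\<alpha><m. deep_v f th M r a0 (pooling_weights m) X 0 i \<alpha>) ` {j*2^k..<(j+1)*2^k})"
  using assms(2)
proof (induction k arbitrary: j g)
  case 0
  have "{..<r 0} \<inter> {\<alpha>. \<alpha> < m} = {..<m}"
    using assms(1) by auto
  moreover have "0 \<le> (\<Sum>\<alpha><m. deep_v f th M r a0 (pooling_weights m) X 0 j \<alpha>)"
    by (intro sum_nonneg deep_v_nonneg)
  ultimately show ?case
    by (simp del: deep_u.simps add: deep_u_Suc relu_eq_self)
next
  case (Suc k)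
  let ?B = "\<lambda>i. \<Sum>\<alpha><m. deep_v f th M r a0 (pooling_weights m) X 0 i \<alpha>"
  have "{..<r (Suc k)} \<inter> {\<alpha>. \<alpha> = 0} = {0}"
    using Suc.prems by auto
  then have "deep_u f th M r a0 (pooling_weights m) X (Suc (Suc k)) j g
      = relu (max (deep_u f th M r a0 (pooling_weights m) X (Suc k) (2*j) 0)
                  (deep_u f th M r a0 (pooling_weights m) X (Suc k) (2*j+1) 0))"
    by (simp del: deep_u.simps add: deep_u_Suc deep_v_def)
  also have "\<dots> = relu (max (Max (?B ` {2*j*2^k..<(2*j+1)*2^k}))
                            (Max (?B ` {(2*j+1)*2^k..<(2*j+1+1)*2^k})))"
  proof -
    have "\<forall>l\<le>k. 1 \<le> r l" using Suc.prems by auto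
    then show ?thesis by (simp only: Suc.IH)
  qed
  also have "\<dots> = relu (Max (?B ` {j*2^Suc k..<(j+1)*2^Suc k}))"
    by (subst Max_image_interval_split) (auto simp: algebra_simps)
  also have "\<dots> = Max (?B ` {j*2^Suc k..<(j+1)*2^Suc k})"
    by (intro relu_eq_self order_trans[OF _ Max_ge[of _ "?B (j*2^Suc k)"]])
      (auto intro!: sum_nonneg deep_v_nonneg)
  finally show ?case .
qed

lemma deep_score_pooling_weights:
  assumes "L \<ge> 1" "m \<le> r 0" "\<forall>l<L. 1 \<le> r l"
  shows "deep_score f th M L r a0 (pooling_weights m) (pooling_weights m L 0) X
       = Max ((\<lambda>i. \<Sum>\<alpha><m. deep_v f th M r a0 (pooling_weights m) X 0 i \<alpha>) ` {..<2^(L-1)})"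
proof -
  obtain k where L: "L = Suc k" using assms(1) by (cases L) auto
  have "deep_score f th M L r a0 (pooling_weights m) (pooling_weights m L 0) X
      = deep_u f th M r a0 (pooling_weights m) X (Suc k) 0 0"
    using assms(1) by (subst deep_score_eq_deep_u) (auto simp: L pooling_weights_def)
  also have "\<dots> = Max ((\<lambda>i. \<Sum>\<alpha><m. deep_v f th M r a0 (pooling_weights m) X 0 i \<alpha>) ` {0..<2^k})"
    by (subst deep_u_pooling_weights) (use assms in \<open>auto simp: L\<close>)
  finally show ?thesis
    by (simp add: L atLeast0LessThan)
qed

subsection \<open>The grid of interleaved inputs\<close>

definition interleave :: "(nat \<Rightarrow> 'x) \<Rightarrow> (nat \<Rightarrow> nat) \<Rightarrow> (nat \<Rightarrow> nat) \<Rightarrow> nat \<Rightarrow> 'x" where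
  "interleave xs p q i = xs (if even i then p (i div 2) else q (i div 2))"

definition dip :: "nat \<Rightarrow> nat \<Rightarrow> real" where
  "dip \<alpha> i = (if i = \<alpha> then 1 else 2)"

lemma sum_max_dip:
  assumes "a < m"
  shows "(\<Sum>\<alpha><m. max (dip \<alpha> a) (dip \<alpha> b)) = 2 * real m - of_bool (a = b)"
proof -
  have "(\<Sum>\<alpha><m. max (dip \<alpha> a) (dip \<alpha> b)) = (\<Sum>\<alpha><m. 2 - (if \<alpha> = a then of_bool (a = b) else 0))"
    by (rule sum.cong) (auto simp: dip_def)
  also have "\<dots> = 2 * real m - of_bool (a = b)"
    using assms by (simp add: sum_subtractf sum.delta)
  finally show ?thesis .
qed

lemma deep_score_interleave:
  assumes a0: "\<And>\<alpha> i. i < M \<Longrightarrow> (\<Sum>d<M. a0 \<alpha> d * f (th d) (xs i)) = dip \<alpha> i"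
    and L: "L \<ge> 1" and r: "\<forall>l<L. 1 \<le> r l" and m: "m \<le> r 0" "m \<le> M"
    and pq: "p \<in> PiE {..<2^(L-1)} (\<lambda>_. {..<m})" "q \<in> PiE {..<2^(L-1)} (\<lambda>_. {..<m})"
  shows "deep_score f th M L r a0 (pooling_weights m) (pooling_weights m L 0) (interleave xs p q)
       = 2 * real m - of_bool (p = q)"
proof -
  have first_layer: "deep_u f th M r a0 A X 0 j \<alpha> = dip \<alpha> e" if "X j = xs e" "e < M" for A X j \<alpha> e
    using that a0 by (simp add: relu_def dip_def)
  have pair_sum: "(\<Sum>\<alpha><m. deep_v f th M r a0 (pooling_weights m) (interleave xs p q) 0 k \<alpha>)
      = 2 * real m - of_bool (p k = q k)" if "k < 2^(L-1)" for k
  proof -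
    have "p k < m" "q k < m"
      using PiE_mem[OF pq(1), of k] PiE_mem[OF pq(2), of k] that by auto
    moreover have "deep_v f th M r a0 (pooling_weights m) (interleave xs p q) 0 k \<alpha>
        = max (dip \<alpha> (p k)) (dip \<alpha> (q k))" for \<alpha>
      unfolding deep_v_def using calculation m(2)
      by (subst (1 2) first_layer[where e = "p k"] first_layer[where e = "q k"])
        (simp_all add: interleave_def)
    ultimately show ?thesis
      by (simp add: sum_max_dip)
  qed
  have "deep_score f th M L r a0 (pooling_weights m) (pooling_weights m L 0) (interleave xs p q)
      = Max ((\<lambda>k. 2 * real m - of_bool (p k = q k)) ` {..<2^(L-1)})"
    by (simp only: deep_score_pooling_weights[OF L m(1) r]) (simp add: pair_sum)
  also have "\<dots> = 2 * real m - of_bool (p = q)"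
    using pq by (simp add: Max_shifted_indicator)
  finally show ?thesis .
qed

subsection \<open>Rank of the shallow network\<close>

lemma sum_max_in_span:
  fixes Z :: nat
  assumes "\<And>z. z < Z \<Longrightarrow> t z \<in> V z"
  shows "(\<lambda>p. \<Sum>z<Z. b z * max (P z p) (t z)) \<in> fun_vs.span ((\<lambda>(z,v) p. max (P z p) v) ` (SIGMA z:{..<Z}. V z))"
proof -
  have "(\<lambda>p. \<Sum>z<Z. b z * max (P z p) (t z)) = (\<Sum>z<Z. scale_fun (b z) (\<lambda>p. max (P z p) (t z)))"
    by (simp add: fun_eq_iff sum_apply scale_fun_def)
  also have "\<dots> \<in> fun_vs.span ((\<lambda>(z,v) p. max (P z p) v) ` (SIGMA z:{..<Z}. V z))"
    using assms by (intro fun_vs.span_sum fun_vs.span_scale fun_vs.span_base) force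
  finally show ?thesis .
qed

lemma shallow_score_interleave_rank:
  assumes "n \<ge> 1"
  obtains S where "finite S" "card S \<le> Z * (n * m)"
    "\<And>q. q \<in> PiE {..<n} (\<lambda>_. {..<m}) \<Longrightarrow>
       (\<lambda>p. shallow_score f th M (2*n) Z c b (interleave xs p q)) \<in> fun_vs.span S"
proof -
  define g where "g z i x = relu (\<Sum>d<M. c z i d * f (th d) x)" for z i x
  define P where "P z p = Max ((\<lambda>k. g z (2*k) (xs (p k))) ` {..<n})" for z p
  define V where "V z = (\<lambda>(k,d). g z (2*k+1) (xs d)) ` ({..<n} \<times> {..<m})" for z
  define S where "S = (\<lambda>(z,v) p. max (P z p) v) ` (SIGMA z:{..<Z}. V z)"
  have "card S \<le> (\<Sum>z<Z. card (V z))"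
    unfolding S_def by (rule order_trans[OF card_image_le]) (simp_all add: V_def card_SigmaI)
  also have "\<dots> \<le> Z * (n * m)"
    using sum_bounded_above[of "{..<Z}" "\<lambda>z. card (V z)" "n * m"]
    by (simp add: V_def card_image_le[THEN order_trans])
  finally have card: "card S \<le> Z * (n * m)" .
  have "(\<lambda>p. shallow_score f th M (2*n) Z c b (interleave xs p q)) \<in> fun_vs.span S"
    if q: "q \<in> PiE {..<n} (\<lambda>_. {..<m})" for q
  proof -
    define t where "t z = Max ((\<lambda>k. g z (2*k+1) (xs (q k))) ` {..<n})" for z
    have "t z \<in> V z" for z
    proof -
      have "t z \<in> (\<lambda>k. g z (2*k+1) (xs (q k))) ` {..<n}"
        unfolding t_def using assms by (intro Max_in) (auto simp: lessThan_empty_iff)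
      with q show ?thesis
        by (force simp: V_def PiE_iff)
    qed
    moreover have "shallow_score f th M (2*n) Z c b (interleave xs p q) = (\<Sum>z<Z. b z * max (P z p) (t z))" for p
      using Max_image_even_odd[OF assms, of "\<lambda>i. g z i (interleave xs p q i)" for z]
      by (simp add: shallow_score_def P_def t_def g_def interleave_def)
    ultimately show ?thesis
      unfolding S_def by (simp add: sum_max_in_span)
  qed
  moreover have "finite S"
    by (simp add: S_def V_def)
  ultimately show thesis
    using card that by blast
qed

lemma nondegenerate_first_layer:
  fixes f :: "'theta \<Rightarrow> real^'s \<Rightarrow> real" and M :: nat
  assumes "family_nondegenerate f"
  obtains xs :: "nat \<Rightarrow> real^'s" and th a0
  where "\<And>\<alpha> i. i < M \<Longrightarrow> (\<Sum>d<M. a0 \<alpha> d * f (th d) (xs i)) = dip \<alpha> i"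
proof -
  define xs :: "nat \<Rightarrow> real^'s" where "xs i = (\<chi> _. real i)" for i
  have "inj_on xs {..<M}"
  proof (rule inj_onI)
    fix i j assume "xs i = xs j"
    then have "xs i $ undefined = xs j $ undefined" by simp
    then show "i = j" by (simp add: xs_def)
  qed
  then obtain th where "\<forall>t. \<exists>a. \<forall>i<M. (\<Sum>d<M. a d * f (th d) (xs i)) = t i"
    using nondegenerate_interpolation[OF assms] by blast
  then have "\<forall>\<alpha>. \<exists>a. \<forall>i<M. (\<Sum>d<M. a d * f (th d) (xs i)) = dip \<alpha> i"
    by blast
  then show thesis
    using choice[of "\<lambda>\<alpha> a. \<forall>i<M. (\<Sum>d<M. a d * f (th d) (xs i)) = dip \<alpha> i"] that by blast
qed

lemma shallow_size_bound:
  assumes a0: "\<And>\<alpha> i. i < M \<Longrightarrow> (\<Sum>d<M. a0 \<alpha> d * f (th d) (xs i)) = dip \<alpha> i"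
    and L: "L \<ge> 1" and r: "\<forall>l<L. 1 \<le> r l" and m: "m \<le> r 0" "m \<le> M" "m \<noteq> 0"
    and eq: "(\<lambda>X. deep_score f th M L r a0 (pooling_weights m) (pooling_weights m L 0) X)
           = (\<lambda>X. shallow_score f th' M (2^L) Z c b X)"
  shows "m ^ 2^(L-1) \<le> Z * (2^(L-1) * m)"
proof -
  define n :: nat where "n = 2^(L-1)"
  have n: "2^L = 2 * n" "n \<ge> 1"
    using L by (auto simp: n_def dest!: Suc_le_D)
  define Q where "Q = PiE {..<n} (\<lambda>_. {..<m})"
  define deep_col where
    "deep_col q p = deep_score f th M L r a0 (pooling_weights m) (pooling_weights m L 0) (interleave xs p q)"
    for q p
  have deep_col: "deep_col q p = 2 * real m - of_bool (p = q)" if "p \<in> Q" "q \<in> Q" for p q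
    unfolding deep_col_def
    by (rule deep_score_interleave[where f = f and th = th and xs = xs, OF a0 L r m(1,2)])
      (use that in \<open>simp_all add: Q_def n_def\<close>)
  obtain S where S: "finite S" "card S \<le> Z * (n * m)"
    "\<And>q. q \<in> Q \<Longrightarrow> (\<lambda>p. shallow_score f th' M (2^L) Z c b (interleave xs p q)) \<in> fun_vs.span S"
    using shallow_score_interleave_rank[OF n(2), of Z m f th' M c b xs]
    unfolding Q_def n(1) by blast
  have "deep_col ` Q \<subseteq> fun_vs.span S"
    using S(3) fun_cong[OF eq] by (auto simp: deep_col_def[abs_def])
  moreover have "real (card Q) * (2 * real m) \<noteq> 1"
  proof -
    have "1 * 2 \<le> real (card Q) * (2 * real m)"
      using m(3) by (intro mult_mono) (auto simp: Q_def card_PiE)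
    then show ?thesis by simp
  qed
  ultimately have "card Q \<le> card S"
    using S(1) deep_col
    by (intro card_le_span_shifted_identity[where F = deep_col and c = "2 * real m"])
      (simp_all add: Q_def finite_PiE)
  with S(2) show ?thesis
    by (simp add: Q_def card_PiE n_def)
qed

lemma shallow_channels_lower_bound:
  assumes a0: "\<And>\<alpha> i. i < M \<Longrightarrow> (\<Sum>d<M. a0 \<alpha> d * f (th d) (xs i)) = dip \<alpha> i"
    and L: "L \<ge> 1" and r: "\<forall>l<L. 1 \<le> r l" and m: "m \<le> r 0" "m \<le> M" "m \<noteq> 0"
    and N: "N = 2 ^ L"
    and eq: "(\<lambda>X. deep_score f th M L r a0 (pooling_weights m) (pooling_weights m L 0) X)
           = (\<lambda>X. shallow_score f th' M N Z c b X)"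
  shows "real m ^ (N div 2) * 2 / (real M * real N) \<le> real Z"
proof -
  have half: "N div 2 = 2^(L-1)" "real N = 2 * real (N div 2)"
    using N L by (auto dest!: Suc_le_D)
  have "m ^ 2^(L-1) \<le> Z * (2^(L-1) * m)"
    using shallow_size_bound[where f = f and th = th and xs = xs, OF a0 L r m] eq N by simp
  also have "\<dots> \<le> Z * (2^(L-1) * M)"
    using m(2) by simp
  finally have "real m ^ (N div 2) \<le> real Z * (real (N div 2) * real M)"
    unfolding half(1) by (metis of_nat_le_iff of_nat_mult of_nat_power)
  moreover have "0 < real M * real N"
    using m N by simp
  ultimately show ?thesis
    by (simp add: divide_le_eq half(2) algebra_simps)
qed

theorem claim15:
  fixes f :: "'theta::topological_space \<Rightarrow> real^'s \<Rightarrow> real"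
    and M L N :: nat and r :: "nat \<Rightarrow> nat"
  assumes cont: "family_continuous f"
    and nondeg: "family_nondegenerate f"
    and L: "L \<ge> 1"
    and N: "N = 2 ^ L"
    and r: "\<forall>l<L. r l \<ge> 1"
  shows "\<exists>(th :: nat \<Rightarrow> 'theta) a0 A aL.
           \<forall>(Z::nat) (th' :: nat \<Rightarrow> 'theta) c b.
             real Z < real (min (r 0) M) ^ (N div 2) * 2 / (real M * real N) \<longrightarrow>
             (\<lambda>X. deep_score f th M L r a0 A aL X) \<noteq> (\<lambda>X. shallow_score f th' M N Z c b X)"
proof -
  define m where "m = min (r 0) M"
  obtain xs :: "nat \<Rightarrow> real^'s" and th a0
    where a0: "\<And>\<alpha> i. i < M \<Longrightarrow> (\<Sum>d<M. a0 \<alpha> d * f (th d) (xs i)) = dip \<alpha> i"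
    by (rule nondegenerate_first_layer[OF nondeg, where M = M]) (rule that)
  have "\<not> real Z < real m ^ (N div 2) * 2 / (real M * real N)"
    if eq: "(\<lambda>X. deep_score f th M L r a0 (pooling_weights m) (pooling_weights m L 0) X)
          = (\<lambda>X. shallow_score f th' M N Z c b X)" for Z th' c b
  proof (cases "M = 0")
    case False
    then have "m \<noteq> 0"
      using r L by (auto simp: m_def)
    with eq show ?thesis
      using shallow_channels_lower_bound[where f = f and th = th and xs = xs, OF a0 L r _ _ _ N]
      by (simp add: m_def not_less)
  qed simp
  then show ?thesis
    unfolding m_def by blast
qed

end
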